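(* Let $(M,\varepsilon)$ be a local Lie group and $p\in M$. Then the evaluation map $e_p:\mathfrak X_\varepsilon(M)\to T_pM$, $\xi\mapsto\xi(p)$, is a linear isomorphism which preserves brackets: $[\xi,\eta](p)=[\xi(p),\eta(p)]_p$ for all $\xi,\eta\in\mathfrak X_\varepsilon(M)$, where on the left is the Lie bracket of vector fields.
   Context: $M$ is a connected smooth manifold, $\dim M=n\ge2$, summation convention. A splitting $\varepsilon$ assigns smoothly to each $(p,q)$ a linear isomorphism $\varepsilon^{p,q}:T_pM\to T_qM$ with $\varepsilon^{q,r}\circ\varepsilon^{p,q}=\varepsilon^{p,r}$, $\varepsilon^{p,p}=\mathrm{id}$; in charts $\varepsilon^{p,q}(\partial/\partial x^j)=\varepsilon^i_j(x,y)\partial/\partial y^i$, and $\Gamma^i_{jk}(x)=[\partial\varepsilon^i_k(x,y)/\partial y^j]_{y=x}$. $\mathfrak X_\varepsilon(M)$ is the vector space of $\varepsilon$-invariant vector fields ($\varepsilon^{p,q}\vartheta(p)=\vartheta(q)$ for all $p,q$). $\mathcal R_2(\varepsilon)^i_{rj,k}=[\partial_r\Gamma^i_{kj}+\Gamma^a_{kr}\Gamma^i_{aj}]_{rj}-[\cdots]_{jr}$. A local Lie group is a manifold $M$ with a splitting $\varepsilon$ such that $\mathcal R_2(\varepsilon)=0$ (equivalently, $\mathfrak X_\varepsilon(M)$ is closed under the Lie bracket). For $u,v\in T_pM$, $[u,v]_p^i=\Gamma^i_{ab}(p)(u^av^b-v^au^b)$. *)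

theory Defs
  imports "HOL-Analysis.Analysis"
begin

text \<open>Smooth manifolds are modelled by an atlas of charts on a topological type 'a.
A chart is a pair (U, phi) with U open in 'a and phi a homeomorphism of U onto an open
subset of real^'n.  Tangent vectors at p are represented by their coordinate vectors in
every chart containing p (value 0 for charts not containing p), compatible under the
Jacobians of the transition maps.\<close>

type_synonym ('a, 'n) chart = "'a set \<times> ('a \<Rightarrow> real^'n)"
type_synonym ('a, 'n) tvec = "('a, 'n) chart \<Rightarrow> real^'n"

text \<open>k-times continuously differentiable maps on a set (intended for open sets).\<close>
fun Ck :: "nat \<Rightarrow> 'x::real_normed_vector set \<Rightarrow> ('x \<Rightarrow> 'y::real_normed_vector) \<Rightarrow> bool" where
  "Ck 0 S f = continuous_on S f"
| "Ck (Suc k) S f = (\<exists>f'. (\<forall>x\<in>S. (f has_derivative f' x) (at x)) \<and> (\<forall>v. Ck k S (\<lambda>x. f' x v)))"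

definition smooth_on :: "'x::real_normed_vector set \<Rightarrow> ('x \<Rightarrow> 'y::real_normed_vector) \<Rightarrow> bool" where
  "smooth_on S f \<longleftrightarrow> (\<forall>k. Ck k S f)"

definition dd :: "('x::real_normed_vector \<Rightarrow> 'y::real_normed_vector) \<Rightarrow> 'x \<Rightarrow> 'x \<Rightarrow> 'y" where
  "dd f x u = frechet_derivative f (at x) u"

definition lcomb :: "real \<Rightarrow> ('b \<Rightarrow> 'x::real_vector) \<Rightarrow> real \<Rightarrow> ('b \<Rightarrow> 'x) \<Rightarrow> 'b \<Rightarrow> 'x" where
  "lcomb a u b v = (\<lambda>z. a *\<^sub>R u z + b *\<^sub>R v z)"

definition lin_on :: "('b \<Rightarrow> 'x::real_vector) set \<Rightarrow> (('b \<Rightarrow> 'x) \<Rightarrow> ('c \<Rightarrow> 'y::real_vector)) \<Rightarrow> bool" where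
  "lin_on S f \<longleftrightarrow> (\<forall>u\<in>S. \<forall>v\<in>S. \<forall>a b. f (lcomb a u b v) = lcomb a (f u) b (f v))"

definition transition :: "('a, 'n) chart \<Rightarrow> ('a, 'n) chart \<Rightarrow> real^'n \<Rightarrow> real^'n" where
  "transition c c' = snd c' \<circ> inv_into (fst c) (snd c)"

definition smooth_atlas :: "('a::topological_space, 'n::finite) chart set \<Rightarrow> bool" where
  "smooth_atlas A \<longleftrightarrow>
     (\<forall>c\<in>A. open (fst c) \<and> inj_on (snd c) (fst c) \<and> open (snd c ` fst c) \<and>
              homeomorphism (fst c) (snd c ` fst c) (snd c) (inv_into (fst c) (snd c))) \<and>
     (\<Union>c\<in>A. fst c) = UNIV \<and>
     (\<forall>c\<in>A. \<forall>c'\<in>A. smooth_on (snd c ` (fst c \<inter> fst c')) (transition c c'))"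

definition tangent_space :: "('a, 'n::finite) chart set \<Rightarrow> 'a \<Rightarrow> ('a, 'n) tvec set" where
  "tangent_space A p = {v. (\<forall>c. (c \<notin> A \<or> p \<notin> fst c) \<longrightarrow> v c = 0) \<and>
      (\<forall>c\<in>A. \<forall>c'\<in>A. p \<in> fst c \<longrightarrow> p \<in> fst c' \<longrightarrow>
          v c' = dd (transition c c') (snd c p) (v c))}"

definition tv :: "('a, 'n::finite) chart set \<Rightarrow> ('a, 'n) chart \<Rightarrow> 'a \<Rightarrow> real^'n \<Rightarrow> ('a, 'n) tvec" where
  "tv A c p w = (\<lambda>c'. if c' \<in> A \<and> p \<in> fst c' then dd (transition c c') (snd c p) w else 0)"

definition loc :: "('a \<Rightarrow> ('a, 'n::finite) tvec) \<Rightarrow> ('a, 'n) chart \<Rightarrow> real^'n \<Rightarrow> real^'n" where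
  "loc \<xi> c x = \<xi> (inv_into (fst c) (snd c) x) c"

definition smooth_vector_field :: "('a::topological_space, 'n::finite) chart set \<Rightarrow> ('a \<Rightarrow> ('a, 'n) tvec) \<Rightarrow> bool" where
  "smooth_vector_field A \<xi> \<longleftrightarrow> (\<forall>p. \<xi> p \<in> tangent_space A p) \<and>
      (\<forall>c\<in>A. smooth_on (snd c ` fst c) (loc \<xi> c))"

text \<open>Coordinates of eps^{p,q} in charts c (at p) and c' (at q):
  split_coord A eps c c' (x,y) w = eps^{x,y}(w^j d/dx^j) expressed in c'.\<close>
definition split_coord :: "('a, 'n::finite) chart set \<Rightarrow> ('a \<Rightarrow> 'a \<Rightarrow> ('a, 'n) tvec \<Rightarrow> ('a, 'n) tvec)
     \<Rightarrow> ('a, 'n) chart \<Rightarrow> ('a, 'n) chart \<Rightarrow> (real^'n) \<times> (real^'n) \<Rightarrow> real^'n \<Rightarrow> real^'n" where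
  "split_coord A eps c c' xy w =
     (let p = inv_into (fst c) (snd c) (fst xy); q = inv_into (fst c') (snd c') (snd xy)
      in eps p q (tv A c p w) c')"

definition splitting :: "('a::topological_space, 'n::finite) chart set \<Rightarrow> ('a \<Rightarrow> 'a \<Rightarrow> ('a, 'n) tvec \<Rightarrow> ('a, 'n) tvec) \<Rightarrow> bool" where
  "splitting A eps \<longleftrightarrow>
     (\<forall>p q. lin_on (tangent_space A p) (eps p q) \<and>
            bij_betw (eps p q) (tangent_space A p) (tangent_space A q)) \<and>
     (\<forall>p q r. \<forall>v\<in>tangent_space A p. eps q r (eps p q v) = eps p r v) \<and>
     (\<forall>p. \<forall>v\<in>tangent_space A p. eps p p v = v) \<and>
     (\<forall>c\<in>A. \<forall>c'\<in>A. \<forall>w. smooth_on (snd c ` fst c \<times> snd c' ` fst c')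
                                     (\<lambda>xy. split_coord A eps c c' xy w))"

text \<open>eps^i_k(x,y) = split_coord A eps c c (x,y) (axis k 1) $ i (same chart c);
  Gamma^i_{jk}(x) = d eps^i_k(x,y)/d y^j at y = x, i.e. Gam A eps c x j k $ i.\<close>
definition Gam :: "('a, 'n::finite) chart set \<Rightarrow> ('a \<Rightarrow> 'a \<Rightarrow> ('a, 'n) tvec \<Rightarrow> ('a, 'n) tvec)
     \<Rightarrow> ('a, 'n) chart \<Rightarrow> real^'n \<Rightarrow> 'n \<Rightarrow> 'n \<Rightarrow> real^'n" where
  "Gam A eps c x j k = dd (\<lambda>y. split_coord A eps c c (x, y) (axis k 1)) x (axis j 1)"

definition R2 :: "('a, 'n::finite) chart set \<Rightarrow> ('a \<Rightarrow> 'a \<Rightarrow> ('a, 'n) tvec \<Rightarrow> ('a, 'n) tvec)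
     \<Rightarrow> ('a, 'n) chart \<Rightarrow> real^'n \<Rightarrow> 'n \<Rightarrow> 'n \<Rightarrow> 'n \<Rightarrow> 'n \<Rightarrow> real" where
  "R2 A eps c x i r j k =
     (dd (\<lambda>x'. Gam A eps c x' k j $ i) x (axis r 1) + (\<Sum>a\<in>UNIV. Gam A eps c x k r $ a * Gam A eps c x a j $ i))
   - (dd (\<lambda>x'. Gam A eps c x' k r $ i) x (axis j 1) + (\<Sum>a\<in>UNIV. Gam A eps c x k j $ a * Gam A eps c x a r $ i))"

definition local_lie_group :: "('a::topological_space, 'n::finite) chart set \<Rightarrow> ('a \<Rightarrow> 'a \<Rightarrow> ('a, 'n) tvec \<Rightarrow> ('a, 'n) tvec) \<Rightarrow> bool" where
  "local_lie_group A eps \<longleftrightarrow> splitting A eps \<and>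
     (\<forall>c\<in>A. \<forall>x\<in>snd c ` fst c. \<forall>i r j k. R2 A eps c x i r j k = 0)"

definition vf_lcomb :: "real \<Rightarrow> ('a \<Rightarrow> ('a, 'n::finite) tvec) \<Rightarrow> real \<Rightarrow> ('a \<Rightarrow> ('a, 'n) tvec) \<Rightarrow> 'a \<Rightarrow> ('a, 'n) tvec" where
  "vf_lcomb a \<xi> b \<eta> = (\<lambda>p. lcomb a (\<xi> p) b (\<eta> p))"

definition vf_subspace :: "('a \<Rightarrow> ('a, 'n::finite) tvec) set \<Rightarrow> bool" where
  "vf_subspace S \<longleftrightarrow> (\<lambda>p c. 0) \<in> S \<and> (\<forall>\<xi>\<in>S. \<forall>\<eta>\<in>S. \<forall>a b. vf_lcomb a \<xi> b \<eta> \<in> S)"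

definition invariant_fields :: "('a::topological_space, 'n::finite) chart set \<Rightarrow> ('a \<Rightarrow> 'a \<Rightarrow> ('a, 'n) tvec \<Rightarrow> ('a, 'n) tvec) \<Rightarrow> ('a \<Rightarrow> ('a, 'n) tvec) set" where
  "invariant_fields A eps = {\<xi>. smooth_vector_field A \<xi> \<and> (\<forall>p q. eps p q (\<xi> p) = \<xi> q)}"

definition lie_bracket :: "('a, 'n::finite) chart set \<Rightarrow> ('a \<Rightarrow> ('a, 'n) tvec) \<Rightarrow> ('a \<Rightarrow> ('a, 'n) tvec) \<Rightarrow> 'a \<Rightarrow> ('a, 'n) tvec" where
  "lie_bracket A \<xi> \<eta> p = (\<lambda>c. if c \<in> A \<and> p \<in> fst c then
       dd (loc \<eta> c) (snd c p) (loc \<xi> c (snd c p)) - dd (loc \<xi> c) (snd c p) (loc \<eta> c (snd c p))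
     else 0)"

definition tangent_bracket :: "('a, 'n::finite) chart set \<Rightarrow> ('a \<Rightarrow> 'a \<Rightarrow> ('a, 'n) tvec \<Rightarrow> ('a, 'n) tvec)
     \<Rightarrow> 'a \<Rightarrow> ('a, 'n) tvec \<Rightarrow> ('a, 'n) tvec \<Rightarrow> ('a, 'n) tvec" where
  "tangent_bracket A eps p u v = (\<lambda>c. if c \<in> A \<and> p \<in> fst c then
       (\<chi> i. \<Sum>a\<in>UNIV. \<Sum>b\<in>UNIV. Gam A eps c (snd c p) a b $ i * (u c $ a * v c $ b - v c $ a * u c $ b))
     else 0)"

end

theory Submission
  imports Defs
begin

(* A splitting eps transports tangent vectors consistently, so every
   v in T_pM extends uniquely to the eps-invariant field  q \<mapsto> eps^{p,q} v; hence
   evaluation at p is a linear bijection from X_eps(M) onto T_pM.  For the bracket,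
   fix a chart c at p with coordinate x = c(p).  An invariant field xi has local form
   y \<mapsto> eps^k(x,y) * xi(p)^k (linear in xi(p) by linearity of eps), so its derivative
   at x in direction u is  xi(p)^k u^j Gamma_{jk}(x).  Substituting into the coordinate
   formula for the Lie bracket gives Gamma^i_{ab}(x)(u^a v^b - v^a u^b) with u = xi(p),
   v = eta(p), i.e. the bracket on T_pM. *)

section \<open>C^k maps and derivatives\<close>

lemma Ck_lincomb:
  "Ck k S f \<Longrightarrow> Ck k S g \<Longrightarrow> Ck k S (\<lambda>x. a *\<^sub>R f x + b *\<^sub>R g x)"
proof (induction k arbitrary: f g)
  case 0
  then show ?case by (auto intro!: continuous_intros)
next
  case (Suc k)
  from Suc.prems obtain f' g'
    where f': "\<forall>x\<in>S. (f has_derivative f' x) (at x)" "\<forall>v. Ck k S (\<lambda>x. f' x v)"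
      and g': "\<forall>x\<in>S. (g has_derivative g' x) (at x)" "\<forall>v. Ck k S (\<lambda>x. g' x v)"
    by auto
  show ?case
    unfolding Ck.simps
    by (rule exI[of _ "\<lambda>x v. a *\<^sub>R f' x v + b *\<^sub>R g' x v"])
       (use f' g' Suc.IH in \<open>auto intro!: derivative_eq_intros\<close>)
qed

lemma Ck_zero: "Ck k S (\<lambda>x. 0)"
  by (induction k) (auto intro!: exI[of _ "\<lambda>x v. 0"])

text \<open>Freezing the first argument of a C^k map on a product gives a C^k map; this is how
  smoothness of eps^{p,q} in (p,q) yields smoothness of the invariant fields.\<close>

lemma Ck_slice:
  assumes "Ck k (S1 \<times> S2) F" and "x0 \<in> S1"
  shows "Ck k S2 (\<lambda>y. F (x0, y))"
  using assms
proof (induction k arbitrary: F)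
  case 0
  then show ?case
    by (auto intro!: continuous_on_compose2[OF 0(1)[simplified]] continuous_intros)
next
  case (Suc k)
  from Suc.prems obtain F'
    where F': "\<forall>z\<in>S1\<times>S2. (F has_derivative F' z) (at z)" "\<forall>v. Ck k (S1\<times>S2) (\<lambda>z. F' z v)"
    by auto
  have "((\<lambda>y. F (x0, y)) has_derivative (\<lambda>u. F' (x0, y) (0, u))) (at y)" if "y \<in> S2" for y
  proof -
    have "((\<lambda>y. (x0, y)) has_derivative (\<lambda>u. (0, u))) (at y)"
      by (auto intro!: derivative_eq_intros)
    then show ?thesis
      using has_derivative_compose[of "\<lambda>y. (x0, y)" _ y UNIV F "F' (x0, y)"] F'(1) Suc.prems(2) that
      by auto
  qed
  moreover have "Ck k S2 (\<lambda>y. F' (x0, y) (0, u))" for u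
    using Suc.IH[of "\<lambda>z. F' z (0, u)"] F'(2) Suc.prems(2) by auto
  ultimately show ?case
    unfolding Ck.simps by (intro exI[of _ "\<lambda>y u. F' (x0, y) (0, u)"]) blast
qed

lemma smooth_has_dd:
  "smooth_on S f \<Longrightarrow> x \<in> S \<Longrightarrow> (f has_derivative dd f x) (at x)"
  unfolding smooth_on_def dd_def by (metis Ck.simps(2) frechet_derivative_at)

lemma linear_basis_expansion:
  fixes f :: "real^'n \<Rightarrow> 'y::real_vector"
  assumes "linear f"
  shows "f w = (\<Sum>k\<in>UNIV. w$k *\<^sub>R f (axis k 1))"
proof -
  have "f w = f (\<Sum>k\<in>UNIV. w$k *\<^sub>R axis k 1)"
    using basis_expansion[of w] by (simp add: scalar_mult_eq_scaleR)
  also have "\<dots> = (\<Sum>k\<in>UNIV. w$k *\<^sub>R f (axis k 1))"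
    using assms by (simp add: linear_sum linear_scale)
  finally show ?thesis .
qed

lemma chart_open_image:
  assumes "smooth_atlas A" "c \<in> A" "open T" "T \<subseteq> fst c"
  shows "open (snd c ` T)"
proof -
  have h: "homeomorphism (fst c) (snd c ` fst c) (snd c) (inv_into (fst c) (snd c))"
          "open (snd c ` fst c)"
    using assms unfolding smooth_atlas_def by auto
  have "openin (top_of_set (fst c)) T"
    using assms(3,4) by (simp add: open_subset)
  from homeomorphism_imp_open_map[OF h(1) this] h(2) show ?thesis
    using openin_open_trans by blast
qed

lemma chart_inverse:
  "smooth_atlas A \<Longrightarrow> c \<in> A \<Longrightarrow> p \<in> fst c \<Longrightarrow> inv_into (fst c) (snd c) (snd c p) = p"
  unfolding smooth_atlas_def by (simp add: inv_into_f_f)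

lemma transition_at:
  "smooth_atlas A \<Longrightarrow> c \<in> A \<Longrightarrow> p \<in> fst c \<Longrightarrow> transition c c' (snd c p) = snd c' p"
  unfolding transition_def by (simp add: chart_inverse)

lemma transition_has_dd:
  assumes "smooth_atlas A" "c \<in> A" "c' \<in> A" "p \<in> fst c" "p \<in> fst c'"
  shows "(transition c c' has_derivative dd (transition c c') (snd c p)) (at (snd c p))"
proof -
  have "smooth_on (snd c ` (fst c \<inter> fst c')) (transition c c')"
    using assms unfolding smooth_atlas_def by auto
  then show ?thesis
    using smooth_has_dd assms by blast
qed

text \<open>Chain rule for Jacobians of transition maps (cocycle condition); this is what makes
  chart coordinates of a tangent vector consistent.\<close>

lemma transition_dd_chain:
  assumes A: "smooth_atlas A" and c: "c \<in> A" "c' \<in> A" "c'' \<in> A"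
    and p: "p \<in> fst c" "p \<in> fst c'" "p \<in> fst c''"
  shows "dd (transition c' c'') (snd c' p) (dd (transition c c') (snd c p) w)
       = dd (transition c c'') (snd c p) w"
proof -
  let ?U = "snd c ` (fst c \<inter> fst c' \<inter> fst c'')"
  have "open (fst c)" "open (fst c')" "open (fst c'')"
    using A c unfolding smooth_atlas_def by auto
  then have U: "open ?U"
    by (intro chart_open_image[OF A c(1)]) auto
  have d1: "(transition c c' has_derivative dd (transition c c') (snd c p)) (at (snd c p))"
    using transition_has_dd A c p by blast
  have d2: "(transition c' c'' has_derivative dd (transition c' c'') (snd c' p))
              (at (transition c c' (snd c p)))"
    using transition_has_dd[OF A c(2,3) p(2,3)] transition_at[OF A c(1) p(1)] by simp
  have agree: "(transition c' c'' \<circ> transition c c') y = transition c c'' y" if "y \<in> ?U" for y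
  proof -
    from that obtain z where z: "z \<in> fst c" "z \<in> fst c'" "y = snd c z" by auto
    show ?thesis
      using transition_at[OF A c(1) z(1), of c'] transition_at[OF A c(2) z(2), of c'']
        transition_at[OF A c(1) z(1), of c''] z(3) by simp
  qed
  have "(transition c c'' has_derivative
          (dd (transition c' c'') (snd c' p) \<circ> dd (transition c c') (snd c p))) (at (snd c p))"
    by (rule has_derivative_transform_within_open[OF diff_chain_at[OF d1 d2] U _ agree])
       (use p in auto)
  moreover have "(transition c c'' has_derivative dd (transition c c'') (snd c p)) (at (snd c p))"
    using transition_has_dd A c p by blast
  ultimately show ?thesis
    using has_derivative_unique by (metis comp_apply)
qed

section \<open>Tangent vectors\<close>

lemma tangent_spaceI:
  assumes "\<And>c'. c' \<notin> A \<or> p \<notin> fst c' \<Longrightarrow> v c' = 0"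
    and "\<And>c' c''. c' \<in> A \<Longrightarrow> c'' \<in> A \<Longrightarrow> p \<in> fst c' \<Longrightarrow> p \<in> fst c'' \<Longrightarrow>
           v c'' = dd (transition c' c'') (snd c' p) (v c')"
  shows "v \<in> tangent_space A p"
  using assms unfolding tangent_space_def by blast

lemma tangent_space_outside:
  "v \<in> tangent_space A p \<Longrightarrow> c' \<notin> A \<or> p \<notin> fst c' \<Longrightarrow> v c' = 0"
  unfolding tangent_space_def by blast

lemma tangent_space_change:
  "v \<in> tangent_space A p \<Longrightarrow> c' \<in> A \<Longrightarrow> c'' \<in> A \<Longrightarrow> p \<in> fst c' \<Longrightarrow> p \<in> fst c'' \<Longrightarrow>
     v c'' = dd (transition c' c'') (snd c' p) (v c')"
  unfolding tangent_space_def by blast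

lemma tangent_space_lcomb:
  assumes A: "smooth_atlas A" and u: "u \<in> tangent_space A p" and v: "v \<in> tangent_space A p"
  shows "lcomb a u b v \<in> tangent_space A p"
proof (rule tangent_spaceI)
  fix c' :: "('a, 'b) chart"
  assume "c' \<notin> A \<or> p \<notin> fst c'"
  then show "lcomb a u b v c' = 0"
    using tangent_space_outside[OF u] tangent_space_outside[OF v] by (simp add: lcomb_def)
next
  fix c' c''
  assume h: "c' \<in> A" "c'' \<in> A" "p \<in> fst c'" "p \<in> fst c''"
  have "linear (dd (transition c' c'') (snd c' p))"
    using has_derivative_linear[OF transition_has_dd[OF A h]] .
  then show "lcomb a u b v c'' = dd (transition c' c'') (snd c' p) (lcomb a u b v c')"
    using tangent_space_change[OF u h] tangent_space_change[OF v h]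
    by (simp add: lcomb_def linear_add linear_scale)
qed

lemma tangent_space_zero:
  assumes A: "smooth_atlas A"
  shows "(\<lambda>c. 0) \<in> tangent_space A p"
proof (rule tangent_spaceI)
  fix c' c''
  assume h: "c' \<in> A" "c'' \<in> A" "p \<in> fst c'" "p \<in> fst c''"
  show "0 = dd (transition c' c'') (snd c' p) 0"
    using linear_0[OF has_derivative_linear[OF transition_has_dd[OF A h]]] by simp
qed simp

lemma tv_in_tangent_space:
  assumes A: "smooth_atlas A" and c: "c \<in> A" "p \<in> fst c"
  shows "tv A c p w \<in> tangent_space A p"
proof (rule tangent_spaceI)
  fix c' :: "('a, 'b) chart"
  assume "c' \<notin> A \<or> p \<notin> fst c'"
  then show "tv A c p w c' = 0" by (auto simp: tv_def)
next
  fix c' c''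
  assume h: "c' \<in> A" "c'' \<in> A" "p \<in> fst c'" "p \<in> fst c''"
  show "tv A c p w c'' = dd (transition c' c'') (snd c' p) (tv A c p w c')"
    using transition_dd_chain[OF A c(1) h(1,2) c(2) h(3,4), of w] h by (simp add: tv_def)
qed

lemma tv_coordinates:
  assumes "v \<in> tangent_space A p" "c \<in> A" "p \<in> fst c"
  shows "tv A c p (v c) = v"
proof
  fix c'
  show "tv A c p (v c) c' = v c'"
    using assms tangent_space_outside[OF assms(1), of c'] tangent_space_change[OF assms(1,2), of c']
    unfolding tv_def by auto
qed

lemma tv_linear:
  assumes A: "smooth_atlas A" and c: "c \<in> A" "p \<in> fst c"
  shows "tv A c p (a *\<^sub>R u + b *\<^sub>R w) = lcomb a (tv A c p u) b (tv A c p w)"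
proof
  fix c'
  show "tv A c p (a *\<^sub>R u + b *\<^sub>R w) c' = lcomb a (tv A c p u) b (tv A c p w) c'"
  proof (cases "c' \<in> A \<and> p \<in> fst c'")
    case True
    then have "linear (dd (transition c c') (snd c p))"
      using has_derivative_linear transition_has_dd[OF A c(1)] c by blast
    then show ?thesis
      using True unfolding tv_def lcomb_def by (simp add: linear_add linear_scale)
  qed (auto simp: tv_def lcomb_def)
qed

section \<open>Consequences of the splitting axioms\<close>

context
  fixes A :: "('a::topological_space, 'n::finite) chart set"
    and eps :: "'a \<Rightarrow> 'a \<Rightarrow> ('a, 'n) tvec \<Rightarrow> ('a, 'n) tvec"
  assumes A: "smooth_atlas A" and S: "splitting A eps"
begin

lemma eps_lcomb:
  "u \<in> tangent_space A p \<Longrightarrow> v \<in> tangent_space A p \<Longrightarrow>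
     eps p q (lcomb a u b v) = lcomb a (eps p q u) b (eps p q v)"
  using S unfolding splitting_def lin_on_def by blast

lemma eps_in_tangent_space: "u \<in> tangent_space A p \<Longrightarrow> eps p q u \<in> tangent_space A q"
  using S unfolding splitting_def bij_betw_def by blast

lemma eps_comp: "u \<in> tangent_space A p \<Longrightarrow> eps q r (eps p q u) = eps p r u"
  using S unfolding splitting_def by blast

lemma eps_id: "u \<in> tangent_space A p \<Longrightarrow> eps p p u = u"
  using S unfolding splitting_def by blast

lemma eps_zero: "eps p q (\<lambda>c. 0) = (\<lambda>c. 0)"
  using eps_lcomb[OF tangent_space_zero[OF A] tangent_space_zero[OF A], of p q 0 0]
  by (simp add: lcomb_def)

lemma split_coord_at:
  "c \<in> A \<Longrightarrow> p \<in> fst c \<Longrightarrow>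
     split_coord A eps c c' (snd c p, y) w = eps p (inv_into (fst c') (snd c') y) (tv A c p w) c'"
  unfolding split_coord_def Let_def using chart_inverse[OF A] by simp

lemma split_coord_linear:
  assumes c: "c \<in> A" "p \<in> fst c"
  shows "linear (\<lambda>w. split_coord A eps c c' (snd c p, y) w)"
proof -
  let ?q = "inv_into (fst c') (snd c') y"
  have lin: "split_coord A eps c c' (snd c p, y) (a *\<^sub>R u + b *\<^sub>R w)
           = a *\<^sub>R split_coord A eps c c' (snd c p, y) u + b *\<^sub>R split_coord A eps c c' (snd c p, y) w"
    for a b u w
    unfolding split_coord_at[OF c] tv_linear[OF A c]
      eps_lcomb[OF tv_in_tangent_space[OF A c] tv_in_tangent_space[OF A c]]
    by (simp add: lcomb_def)
  show ?thesis
    by (rule linearI) (use lin[of 1 _ 1] lin[of _ _ 0] in simp_all)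
qed

lemma split_coord_smooth_slice:
  assumes "c \<in> A" "c' \<in> A" "p \<in> fst c"
  shows "smooth_on (snd c' ` fst c') (\<lambda>y. split_coord A eps c c' (snd c p, y) w)"
proof -
  have "smooth_on (snd c ` fst c \<times> snd c' ` fst c') (\<lambda>xy. split_coord A eps c c' xy w)"
    using S assms unfolding splitting_def by blast
  then show ?thesis
    using Ck_slice assms(3) unfolding smooth_on_def by blast
qed

section \<open>Invariant vector fields\<close>

lemma invariant_fieldsD:
  assumes "\<xi> \<in> invariant_fields A eps"
  shows "\<And>q. \<xi> q \<in> tangent_space A q"
    and "\<And>c. c \<in> A \<Longrightarrow> smooth_on (snd c ` fst c) (loc \<xi> c)"
    and "\<And>p q. eps p q (\<xi> p) = \<xi> q"
  using assms unfolding invariant_fields_def smooth_vector_field_def by auto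

lemma invariant_fields_subspace: "vf_subspace (invariant_fields A eps)"
  unfolding vf_subspace_def
proof safe
  show "(\<lambda>p c. 0) \<in> invariant_fields A eps"
    unfolding invariant_fields_def smooth_vector_field_def smooth_on_def loc_def
    using tangent_space_zero[OF A] eps_zero by (simp add: Ck_zero)
next
  fix \<xi> \<eta> a b
  assume xi: "\<xi> \<in> invariant_fields A eps" and eta: "\<eta> \<in> invariant_fields A eps"
  have loc_lcomb: "loc (vf_lcomb a \<xi> b \<eta>) c = (\<lambda>x. a *\<^sub>R loc \<xi> c x + b *\<^sub>R loc \<eta> c x)" for c
    by (simp add: fun_eq_iff loc_def vf_lcomb_def lcomb_def)
  show "vf_lcomb a \<xi> b \<eta> \<in> invariant_fields A eps"
    unfolding invariant_fields_def smooth_vector_field_def mem_Collect_eq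
  proof (intro conjI allI ballI)
    show "vf_lcomb a \<xi> b \<eta> q \<in> tangent_space A q" for q
      unfolding vf_lcomb_def
      by (rule tangent_space_lcomb[OF A invariant_fieldsD(1)[OF xi] invariant_fieldsD(1)[OF eta]])
    show "smooth_on (snd c ` fst c) (loc (vf_lcomb a \<xi> b \<eta>) c)" if "c \<in> A" for c
      using invariant_fieldsD(2)[OF xi that] invariant_fieldsD(2)[OF eta that]
      unfolding loc_lcomb smooth_on_def by (blast intro: Ck_lincomb)
    show "eps p q (vf_lcomb a \<xi> b \<eta> p) = vf_lcomb a \<xi> b \<eta> q" for p q
      unfolding vf_lcomb_def
        eps_lcomb[OF invariant_fieldsD(1)[OF xi] invariant_fieldsD(1)[OF eta]]
        invariant_fieldsD(3)[OF xi] invariant_fieldsD(3)[OF eta] ..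
  qed
qed

definition invariant_extension :: "'a \<Rightarrow> ('a, 'n) tvec \<Rightarrow> 'a \<Rightarrow> ('a, 'n) tvec" where
  "invariant_extension p v = (\<lambda>q. eps p q v)"

lemma invariant_extension_invariant:
  assumes v: "v \<in> tangent_space A p"
  shows "invariant_extension p v \<in> invariant_fields A eps"
proof -
  obtain c where c: "c \<in> A" "p \<in> fst c"
    using A unfolding smooth_atlas_def by blast
  have "loc (invariant_extension p v) c' = (\<lambda>y. split_coord A eps c c' (snd c p, y) (v c))" for c'
    unfolding split_coord_at[OF c] tv_coordinates[OF v c] loc_def invariant_extension_def ..
  then show ?thesis
    using eps_in_tangent_space[OF v] eps_comp[OF v] split_coord_smooth_slice[OF c(1) _ c(2)]
    unfolding invariant_fields_def smooth_vector_field_def invariant_extension_def by auto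
qed

lemma evaluation_bij: "bij_betw (\<lambda>\<xi>. \<xi> p) (invariant_fields A eps) (tangent_space A p)"
proof (rule bij_betw_imageI)
  show "inj_on (\<lambda>\<xi>. \<xi> p) (invariant_fields A eps)"
    by (rule inj_onI) (metis ext invariant_fieldsD(3))
  have "v \<in> (\<lambda>\<xi>. \<xi> p) ` invariant_fields A eps" if "v \<in> tangent_space A p" for v
    using invariant_extension_invariant[OF that] eps_id[OF that]
    by (metis image_eqI invariant_extension_def)
  then show "(\<lambda>\<xi>. \<xi> p) ` invariant_fields A eps = tangent_space A p"
    using invariant_fieldsD(1) by blast
qed

lemma invariant_field_local_form:
  assumes xi: "\<xi> \<in> invariant_fields A eps" and c: "c \<in> A" "p \<in> fst c"
  shows "loc \<xi> c = (\<lambda>y. split_coord A eps c c (snd c p, y) (\<xi> p c))"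
  unfolding split_coord_at[OF c] tv_coordinates[OF invariant_fieldsD(1)[OF xi] c]
    invariant_fieldsD(3)[OF xi] loc_def ..

lemma invariant_field_derivative:
  assumes xi: "\<xi> \<in> invariant_fields A eps" and c: "c \<in> A" "p \<in> fst c"
  shows "dd (loc \<xi> c) (snd c p) u
       = (\<Sum>k\<in>UNIV. (\<xi> p c $ k) *\<^sub>R (\<Sum>j\<in>UNIV. u$j *\<^sub>R Gam A eps c (snd c p) j k))"
proof -
  define x where "x = snd c p"
  define E where "E k = (\<lambda>y. split_coord A eps c c (x, y) (axis k 1))" for k
  have dE: "(E k has_derivative dd (E k) x) (at x)" for k
    unfolding E_def x_def
    by (rule smooth_has_dd[OF split_coord_smooth_slice[OF c(1) c(1) c(2)]]) (use c in simp)
  have local_form: "loc \<xi> c = (\<lambda>y. \<Sum>k\<in>UNIV. (\<xi> p c $ k) *\<^sub>R E k y)"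
    unfolding invariant_field_local_form[OF xi c] E_def x_def
    by (rule ext, rule linear_basis_expansion[OF split_coord_linear[OF c]])
  have "((\<lambda>y. \<Sum>k\<in>UNIV. (\<xi> p c $ k) *\<^sub>R E k y) has_derivative
          (\<lambda>u. \<Sum>k\<in>UNIV. (\<xi> p c $ k) *\<^sub>R dd (E k) x u)) (at x)"
    by (intro has_derivative_sum has_derivative_scaleR_right dE)
  then have "dd (loc \<xi> c) x = (\<lambda>u. \<Sum>k\<in>UNIV. (\<xi> p c $ k) *\<^sub>R dd (E k) x u)"
    unfolding local_form dd_def by (rule frechet_derivative_at[symmetric])
  moreover have "dd (E k) x u = (\<Sum>j\<in>UNIV. u$j *\<^sub>R Gam A eps c x j k)" for k
    using linear_basis_expansion[OF has_derivative_linear[OF dE[of k]], of u]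
    by (simp only: Gam_def E_def)
  ultimately show ?thesis
    unfolding x_def by simp
qed

end

lemma bracket_index_identity:
  fixes G :: "'n::finite \<Rightarrow> 'n \<Rightarrow> real^'m" and u v :: "real^'n"
  shows "(\<Sum>k\<in>UNIV. v$k *\<^sub>R (\<Sum>j\<in>UNIV. u$j *\<^sub>R G j k))
       - (\<Sum>k\<in>UNIV. u$k *\<^sub>R (\<Sum>j\<in>UNIV. v$j *\<^sub>R G j k))
       = (\<chi> i. \<Sum>a\<in>UNIV. \<Sum>b\<in>UNIV. G a b $ i * (u$a * v$b - v$a * u$b))"
proof (rule iffD2[OF vec_eq_iff], rule allI)
  fix i
  have "(\<Sum>a\<in>UNIV. \<Sum>b\<in>UNIV. G a b $ i * (u$a * v$b - v$a * u$b))
      = (\<Sum>b\<in>UNIV. \<Sum>a\<in>UNIV. v$b * (u$a * G a b $ i) - u$b * (v$a * G a b $ i))"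
    by (subst sum.swap) (simp add: algebra_simps)
  then show "((\<Sum>k\<in>UNIV. v$k *\<^sub>R (\<Sum>j\<in>UNIV. u$j *\<^sub>R G j k))
           - (\<Sum>k\<in>UNIV. u$k *\<^sub>R (\<Sum>j\<in>UNIV. v$j *\<^sub>R G j k))) $ i
           = (\<chi> i. \<Sum>a\<in>UNIV. \<Sum>b\<in>UNIV. G a b $ i * (u$a * v$b - v$a * u$b)) $ i"
    by (simp add: sum_subtractf sum_distrib_left)
qed

lemma invariant_fields_bracket:
  assumes A: "smooth_atlas A" and S: "splitting A eps"
    and xi: "\<xi> \<in> invariant_fields A eps" and eta: "\<eta> \<in> invariant_fields A eps"
  shows "lie_bracket A \<xi> \<eta> p = tangent_bracket A eps p (\<xi> p) (\<eta> p)"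
proof
  fix c
  show "lie_bracket A \<xi> \<eta> p c = tangent_bracket A eps p (\<xi> p) (\<eta> p) c"
  proof (cases "c \<in> A \<and> p \<in> fst c")
    case True
    then have c: "c \<in> A" "p \<in> fst c" by auto
    have "loc \<xi> c (snd c p) = \<xi> p c" "loc \<eta> c (snd c p) = \<eta> p c"
      unfolding loc_def chart_inverse[OF A c] by auto
    then have "lie_bracket A \<xi> \<eta> p c
        = (\<Sum>k\<in>UNIV. \<eta> p c $ k *\<^sub>R (\<Sum>j\<in>UNIV. \<xi> p c $ j *\<^sub>R Gam A eps c (snd c p) j k))
        - (\<Sum>k\<in>UNIV. \<xi> p c $ k *\<^sub>R (\<Sum>j\<in>UNIV. \<eta> p c $ j *\<^sub>R Gam A eps c (snd c p) j k))"
      unfolding lie_bracket_def if_P[OF True]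
      by (simp only: invariant_field_derivative[OF A S eta c] invariant_field_derivative[OF A S xi c])
    also have "\<dots> = tangent_bracket A eps p (\<xi> p) (\<eta> p) c"
      unfolding bracket_index_identity tangent_bracket_def if_P[OF True] ..
    finally show ?thesis .
  qed (auto simp: lie_bracket_def tangent_bracket_def)
qed

theorem proposition11:
  fixes A :: "('a::{t2_space, second_countable_topology}, 'n::finite) chart set"
    and eps :: "'a \<Rightarrow> 'a \<Rightarrow> ('a, 'n) tvec \<Rightarrow> ('a, 'n) tvec"
    and p :: 'a
  assumes "CARD('n) \<ge> 2"
    and "connected (UNIV :: 'a set)"
    and "smooth_atlas A"
    and "local_lie_group A eps"
  shows "vf_subspace (invariant_fields A eps)
       \<and> (\<forall>\<xi>\<in>invariant_fields A eps. \<forall>\<eta>\<in>invariant_fields A eps. \<forall>a b.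
             vf_lcomb a \<xi> b \<eta> p = lcomb a (\<xi> p) b (\<eta> p))
       \<and> bij_betw (\<lambda>\<xi>. \<xi> p) (invariant_fields A eps) (tangent_space A p)
       \<and> (\<forall>\<xi>\<in>invariant_fields A eps. \<forall>\<eta>\<in>invariant_fields A eps.
             lie_bracket A \<xi> \<eta> p = tangent_bracket A eps p (\<xi> p) (\<eta> p))"
proof -
  have S: "splitting A eps"
    using assms(4) unfolding local_lie_group_def by blast
  have evaluation_linear: "vf_lcomb a \<xi> b \<eta> p = lcomb a (\<xi> p) b (\<eta> p)" for a b \<xi> \<eta>
    by (simp add: vf_lcomb_def)
  show ?thesis
    using invariant_fields_subspace[OF assms(3) S] evaluation_linear
      evaluation_bij[OF assms(3) S] invariant_fields_bracket[OF assms(3) S]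
    by blast
qed

end
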